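(* Let $\Phi(\lambda)=\int_0^\infty (1-e^{-s\lambda})\,\Pi(ds)$ be a Bernstein function, let $H=\{H_t\}_{t\ge0}$ be a subordinator with $H_0=0$ and $\mathbf{E}[e^{-\lambda H_t}]=e^{-t\Phi(\lambda)}$ for $\lambda>0$, $t>0$, and let $L_t:=\inf\{s>0: H_s>t\}$, $t>0$, with $L_0=0$, be its inverse. Let $\theta>0$ be fixed. Then for every $x\ge 0$ and every $\lambda>0$, $$\int_0^\infty e^{-\lambda t}\,\mathbf{E}_0\!\left[\frac{1-e^{-\theta(L_t-x)}}{\theta}\,\mathbf{1}_{(L_t\ge x)}\right]dt=\frac{1}{\lambda}\,\frac{1}{\theta+\Phi(\lambda)}\,e^{-x\Phi(\lambda)}$$ and $$\int_0^\infty e^{-\lambda t}\,\mathbf{E}_0\!\left[e^{-\theta(L_t-x)}\,\mathbf{1}_{(L_t\ge x)}\right]dt=\frac{\Phi(\lambda)}{\lambda}\,\frac{1}{\theta+\Phi(\lambda)}\,e^{-x\Phi(\lambda)}.$$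
   Context: $\Pi$ is the Lévy measure of the subordinator $H$ (a measure on $(0,\infty)$ with $\int_0^\infty \min(1,s)\,\Pi(ds)<\infty$); the paper works throughout with $\Pi((0,\infty))=\infty$ (so $H$ has strictly increasing paths and $L$ has continuous non-decreasing paths), and assumes $L_t$ and $H_t$ admit densities. $\mathbf{E}_0$ denotes expectation for the processes started at $0$. The relation $\mathbf{P}_0(L_t<s)=\mathbf{P}_0(H_s>t)$ holds. *)

theory Defs
  imports "HOL-Probability.Probability"
begin

text \<open>Levy measure of a (driftless) subordinator: a measure on the reals
  concentrated on (0,\<infinity>) with finite integral of min(1,s).  The paper
  additionally works with infinite total mass.\<close>
definition levy_measure :: "real measure \<Rightarrow> bool" where
  "levy_measure Pm \<longleftrightarrow> sets Pm = sets borel \<and> emeasure Pm {..0} = 0 \<and>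
     (\<integral>\<^sup>+ s. ennreal (min 1 s) \<partial>Pm) < \<infinity>"

definition bernstein :: "real measure \<Rightarrow> real \<Rightarrow> real" where
  "bernstein Pm lam = (\<integral> s. (1 - exp (- s * lam)) \<partial>Pm)"

definition subordinator :: "'a measure \<Rightarrow> (real \<Rightarrow> 'a \<Rightarrow> real) \<Rightarrow> bool" where
  "subordinator M H \<longleftrightarrow> prob_space M \<and>
     (\<forall>t. H t \<in> borel_measurable M) \<and>
     (\<forall>\<omega>\<in>space M. H 0 \<omega> = 0 \<and> mono_on {0..} (\<lambda>t. H t \<omega>) \<and>
        (\<forall>t\<ge>0. continuous (at_right t) (\<lambda>s. H s \<omega>))) \<and>
     (\<forall>s t. 0 \<le> s \<longrightarrow> 0 \<le> t \<longrightarrow>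
        distr M borel (\<lambda>\<omega>. H (s + t) \<omega> - H s \<omega>) = distr M borel (H t)) \<and>
     (\<forall>(tt :: nat \<Rightarrow> real) n. 0 \<le> tt 0 \<and> (\<forall>i<n. tt i \<le> tt (Suc i)) \<longrightarrow>
        prob_space.indep_vars M (\<lambda>_. borel) (\<lambda>i \<omega>. H (tt (Suc i)) \<omega> - H (tt i) \<omega>) {..<n})"

definition inverse_sub :: "(real \<Rightarrow> 'a \<Rightarrow> real) \<Rightarrow> real \<Rightarrow> 'a \<Rightarrow> real" where
  "inverse_sub H t \<omega> = (if t = 0 then 0 else Inf {s. s > 0 \<and> H s \<omega> > t})"

end

theory Submission
  imports Defs
begin

text \<open>For t > 0 and s \<ge> 0 the events {L_t > s} and {H_s < t} agree almost surely, because H_s has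
  no atom at t, H eventually exceeds t (a Chernoff bound, using \<Phi> > 0) and H is right-continuous.
  Integrating against e^(-\<lambda>t) and applying Tonelli gives the tail formula
  \<integral>_0^\<infinity> e^(-\<lambda>t) P(L_t > s) dt = E[e^(-\<lambda>H_s)] / \<lambda> = e^(-s\<Phi>(\<lambda>)) / \<lambda>.
  Writing (1 - e^(-\<theta>(y-x))) / \<theta> 1_{y \<ge> x} = \<integral>_x^\<infinity> e^(-\<theta>(s-x)) 1_{s < y} ds, a second
  application of Tonelli reduces the first identity to the elementary integral
  \<integral>_x^\<infinity> e^(-\<theta>(s-x)) e^(-s\<Phi>(\<lambda>)) / \<lambda> ds. The second identity is the tail formula at s = x
  (L_t has no atom at x) minus \<theta> times the first, since
  e^(-\<theta>(y-x)) 1_{y \<ge> x} = 1_{y \<ge> x} - (1 - e^(-\<theta>(y-x))) 1_{y \<ge> x}.\<close>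

definition damped_excess :: "real \<Rightarrow> real \<Rightarrow> real \<Rightarrow> real" where
  "damped_excess \<theta> x y = (1 - exp (- \<theta> * (y - x))) / \<theta> * indicator {x..} y"

lemma borel_measurable_damped_excess [measurable]: "damped_excess \<theta> x \<in> borel_measurable borel"
  unfolding damped_excess_def[abs_def] indicator_def atLeast_iff by measurable

lemma damped_excess_nonneg: "\<theta> > 0 \<Longrightarrow> 0 \<le> damped_excess \<theta> x y"
  by (simp add: damped_excess_def split: split_indicator)

lemma damped_excess_le: "\<theta> > 0 \<Longrightarrow> damped_excess \<theta> x y \<le> 1 / \<theta>"
  by (simp add: damped_excess_def divide_right_mono split: split_indicator)

lemma exp_mult_indicator_eq_damped_excess:
  "\<theta> \<noteq> 0 \<Longrightarrow> exp (- \<theta> * (y - x)) * indicator {x..} y = indicator {x..} y - \<theta> * damped_excess \<theta> x y"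
  by (simp add: damped_excess_def split: split_indicator)

lemma nn_integral_exp_atLeast:
  fixes c a :: real
  assumes "c > 0"
  shows "(\<integral>\<^sup>+t. ennreal (exp (- c * t)) * indicator {a..} t \<partial>lborel) = ennreal (exp (- c * a) / c)"
proof -
  have "(\<integral>\<^sup>+t. ennreal (exp (- c * t)) * indicator {a..} t \<partial>lborel) = ennreal (0 - (- exp (- c * a) / c))"
  proof (rule nn_integral_FTC_atLeast)
    show "((\<lambda>t. - exp (- c * t) / c) has_real_derivative exp (- c * t)) (at t)" for t
      using assms by (auto intro!: derivative_eq_intros)
    show "((\<lambda>t. - exp (- c * t) / c) \<longlongrightarrow> 0) at_top"
      using assms by real_asymp
  qed auto
  then show ?thesis by simp
qed

lemma nn_integral_exp_greaterThan:
  fixes c a :: real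
  assumes "c > 0"
  shows "(\<integral>\<^sup>+t. ennreal (exp (- c * t)) * indicator {a<..} t \<partial>lborel) = ennreal (exp (- c * a) / c)"
proof -
  have "(\<integral>\<^sup>+t. ennreal (exp (- c * t)) * indicator {a<..} t \<partial>lborel)
      = (\<integral>\<^sup>+t. ennreal (exp (- c * t)) * indicator {a..} t \<partial>lborel)"
    using AE_lborel_singleton[of a]
    by (intro nn_integral_cong_AE) (auto elim!: eventually_mono split: split_indicator)
  with nn_integral_exp_atLeast[OF assms] show ?thesis by simp
qed

lemma ennreal_damped_excess_eq_nn_integral:
  assumes "\<theta> > 0"
  shows "ennreal (damped_excess \<theta> x y) =
    (\<integral>\<^sup>+s. ennreal (exp (- \<theta> * (s - x))) * indicator {x..} s * indicator {s<..} y \<partial>lborel)"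
proof (cases "x \<le> y")
  case False
  have "(\<integral>\<^sup>+s. ennreal (exp (- \<theta> * (s - x))) * indicator {x..} s * indicator {s<..} y \<partial>lborel)
      = (\<integral>\<^sup>+(s::real). 0 \<partial>lborel)"
    by (rule nn_integral_cong) (use False in \<open>auto split: split_indicator\<close>)
  with False show ?thesis by (simp add: damped_excess_def)
next
  case True
  have "has_bochner_integral lborel (\<lambda>s. exp (- \<theta> * (s - x)) * indicator {x..y} s)
      (- exp (- \<theta> * (y - x)) / \<theta> - - exp (- \<theta> * (x - x)) / \<theta>)"
    using assms
    by (intro has_bochner_integral_FTC_Icc_real[OF True])
      (auto intro!: derivative_eq_intros continuous_intros)
  then have "(\<integral>\<^sup>+s. ennreal (exp (- \<theta> * (s - x)) * indicator {x..y} s) \<partial>lborel)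
      = ennreal (damped_excess \<theta> x y)"
    using True assms
    by (subst nn_integral_eq_integral) (auto simp: has_bochner_integral_iff damped_excess_def field_simps)
  moreover have "(\<integral>\<^sup>+s. ennreal (exp (- \<theta> * (s - x))) * indicator {x..} s * indicator {s<..} y \<partial>lborel)
      = (\<integral>\<^sup>+s. ennreal (exp (- \<theta> * (s - x)) * indicator {x..y} s) \<partial>lborel)"
    using AE_lborel_singleton[of y]
    by (intro nn_integral_cong_AE) (auto elim!: eventually_mono split: split_indicator)
  ultimately show ?thesis by simp
qed

lemma nn_integral_damped_exp_laplace:
  assumes "\<theta> + \<Phi> > 0" and "lam > 0"
  shows "(\<integral>\<^sup>+s. ennreal (exp (- \<theta> * (s - x))) * indicator {x..} s * ennreal (exp (- s * \<Phi>) / lam) \<partial>lborel)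
    = ennreal (1 / lam * (1 / (\<theta> + \<Phi>)) * exp (- x * \<Phi>))"
proof -
  have "(\<integral>\<^sup>+s. ennreal (exp (- \<theta> * (s - x))) * indicator {x..} s * ennreal (exp (- s * \<Phi>) / lam) \<partial>lborel)
      = (\<integral>\<^sup>+s. ennreal (exp (\<theta> * x) / lam) * (ennreal (exp (- (\<theta> + \<Phi>) * s)) * indicator {x..} s) \<partial>lborel)"
  proof (rule nn_integral_cong)
    fix s :: real
    have "exp (- \<theta> * (s - x)) * (exp (- s * \<Phi>) / lam) = exp (\<theta> * x) / lam * exp (- (\<theta> + \<Phi>) * s)"
      by (simp add: exp_add[symmetric] algebra_simps)
    then show "ennreal (exp (- \<theta> * (s - x))) * indicator {x..} s * ennreal (exp (- s * \<Phi>) / lam)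
        = ennreal (exp (\<theta> * x) / lam) * (ennreal (exp (- (\<theta> + \<Phi>) * s)) * indicator {x..} s)"
      using assms by (simp add: ennreal_mult'[symmetric] ac_simps)
  qed
  also have "\<dots> = ennreal (exp (\<theta> * x) / lam) * ennreal (exp (- (\<theta> + \<Phi>) * x) / (\<theta> + \<Phi>))"
    using nn_integral_exp_atLeast[OF assms(1)] by (subst nn_integral_cmult) auto
  also have "\<dots> = ennreal (1 / lam * (1 / (\<theta> + \<Phi>)) * exp (- x * \<Phi>))"
    using assms by (simp add: ennreal_mult[symmetric] exp_add[symmetric] algebra_simps)
  finally show ?thesis .
qed

lemma
  fixes f :: "real \<Rightarrow> real"
  assumes "f \<in> borel_measurable lborel" and "A \<in> sets lborel" and "\<And>t. 0 \<le> f t"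
    and "(\<integral>\<^sup>+t. ennreal (indicator A t * f t) \<partial>lborel) = ennreal r" and "0 \<le> r"
  shows set_integrable_of_nn_integral: "set_integrable lborel A f"
    and set_integral_eq_of_nn_integral: "(LBINT t:A. f t) = r"
proof -
  have "has_bochner_integral lborel (\<lambda>t. indicator A t * f t) r"
    using assms by (intro has_bochner_integral_nn_integral) auto
  then show "set_integrable lborel A f" "(LBINT t:A. f t) = r"
    by (simp_all add: set_integrable_def set_lebesgue_integral_def has_bochner_integral_iff)
qed

lemma one_minus_exp_le_min:
  fixes s lam :: real
  assumes "s > 0" and "lam \<ge> 0"
  shows "1 - exp (- s * lam) \<le> max 1 lam * min 1 s"
proof (cases "s \<le> 1")
  case True
  have "1 - exp (- s * lam) \<le> s * lam"
    using exp_ge_add_one_self[of "- s * lam"] by simp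
  also have "\<dots> \<le> max 1 lam * min 1 s"
    using True assms by (simp add: mult.commute mult_right_mono)
  finally show ?thesis .
next
  case False
  then show ?thesis by (simp add: le_max_iff_disj)
qed

lemma levy_measure_AE_pos:
  assumes "levy_measure Pm"
  shows "AE s in Pm. s > 0"
proof -
  have "{..0::real} \<in> null_sets Pm"
    using assms by (auto simp: levy_measure_def null_sets_def)
  then show ?thesis by (rule AE_I') auto
qed

lemma integrable_bernstein_integrand:
  assumes levy: "levy_measure Pm" and lam: "lam \<ge> 0"
  shows "integrable Pm (\<lambda>s. 1 - exp (- s * lam))"
proof (rule integrableI_bounded)
  have sets: "sets Pm = sets borel" using levy by (simp add: levy_measure_def)
  show "(\<lambda>s. 1 - exp (- s * lam)) \<in> borel_measurable Pm"
    by (simp add: measurable_cong_sets[OF sets refl])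
  have "(\<integral>\<^sup>+ s. norm (1 - exp (- s * lam)) \<partial>Pm) \<le> (\<integral>\<^sup>+ s. ennreal (max 1 lam) * ennreal (min 1 s) \<partial>Pm)"
    using levy_measure_AE_pos[OF levy] one_minus_exp_le_min lam
    by (intro nn_integral_mono_AE)
      (auto elim!: eventually_mono simp: ennreal_mult[symmetric] intro!: ennreal_leI)
  also have "\<dots> = ennreal (max 1 lam) * (\<integral>\<^sup>+ s. ennreal (min 1 s) \<partial>Pm)"
    by (intro nn_integral_cmult) (simp add: measurable_cong_sets[OF sets refl])
  also have "\<dots> < \<infinity>"
    using levy by (simp add: levy_measure_def ennreal_mult_less_top)
  finally show "(\<integral>\<^sup>+ s. norm (1 - exp (- s * lam)) \<partial>Pm) < \<infinity>" .
qed

lemma bernstein_pos: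
  assumes levy: "levy_measure Pm" and infinite_mass: "emeasure Pm {0<..} = \<infinity>" and lam: "lam > 0"
  shows "bernstein Pm lam > 0"
proof -
  have pos: "AE s in Pm. s > 0" by (rule levy_measure_AE_pos[OF levy])
  then have nonneg: "AE s in Pm. 0 \<le> 1 - exp (- s * lam)"
    using lam by (auto elim!: eventually_mono)
  have "bernstein Pm lam \<noteq> 0"
  proof
    assume "bernstein Pm lam = 0"
    then have "AE s in Pm. 1 - exp (- s * lam) = 0"
      using integral_nonneg_eq_0_iff_AE[OF integrable_bernstein_integrand[OF levy] nonneg] lam
      by (simp add: bernstein_def)
    then have "AE s in Pm. s \<notin> {0<..}"
      using pos lam by (auto elim!: eventually_mono)
    moreover have "sets Pm = sets borel" using levy by (simp add: levy_measure_def)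
    ultimately have "emeasure Pm {0<..} = 0"
      using sets_eq_imp_space_eq[of Pm borel] by (subst AE_iff_measurable[symmetric, where N="{0<..}"]) auto
    with infinite_mass show False by simp
  qed
  moreover have "bernstein Pm lam \<ge> 0"
    unfolding bernstein_def using nonneg by (rule integral_nonneg_AE)
  ultimately show ?thesis by simp
qed

locale subordinator_process =
  fixes M :: "'a measure" and H :: "real \<Rightarrow> 'a \<Rightarrow> real"
  assumes subordinator: "subordinator M H"
begin

sublocale prob_space M
  using subordinator by (simp add: subordinator_def)

lemma borel_measurable_H [measurable]: "H s \<in> borel_measurable M"
  using subordinator by (simp add: subordinator_def)

lemma H_zero: "\<omega> \<in> space M \<Longrightarrow> H 0 \<omega> = 0"
  using subordinator by (simp add: subordinator_def)

lemma H_mono: "\<omega> \<in> space M \<Longrightarrow> 0 \<le> r \<Longrightarrow> r \<le> s \<Longrightarrow> H r \<omega> \<le> H s \<omega>"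
  using subordinator by (auto simp: subordinator_def mono_on_def)

lemma H_continuous_at_right: "\<omega> \<in> space M \<Longrightarrow> 0 \<le> s \<Longrightarrow> continuous (at_right s) (\<lambda>r. H r \<omega>)"
  using subordinator by (simp add: subordinator_def)

lemma H_nonneg: "\<omega> \<in> space M \<Longrightarrow> 0 \<le> s \<Longrightarrow> 0 \<le> H s \<omega>"
  using H_mono[of \<omega> 0 s] H_zero by simp

lemma integrable_exp_H: "0 \<le> lam \<Longrightarrow> 0 \<le> s \<Longrightarrow> integrable M (\<lambda>\<omega>. exp (- lam * H s \<omega>))"
  by (intro integrable_const_bound[where B=1] AE_I2) (auto simp: H_nonneg)

lemma pair_sigma_finite_lborel: "pair_sigma_finite M lborel"
  by (intro pair_sigma_finite.intro prob_space_imp_sigma_finite[OF prob_space_axioms] sigma_finite_lborel)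

text \<open>If no s > 0 has H s \<omega> > t, the infimum defining the inverse is taken over the empty set and
  is the unspecified real Inf {}; the second disjunct covers this case. Restricting to rational
  times makes the condition measurable in (t, \<omega>).\<close>
lemma inverse_sub_less_iff:
  assumes \<omega>: "\<omega> \<in> space M" and t: "t \<noteq> 0"
  shows "inverse_sub H t \<omega> < a \<longleftrightarrow>
    (\<exists>q::rat. 0 < real_of_rat q \<and> real_of_rat q < a \<and> t < H (real_of_rat q) \<omega>) \<or>
    ((\<forall>n::nat. H (real n + 1) \<omega> \<le> t) \<and> Inf ({}::real set) < a)"
proof -
  define S where "S = {s. s > 0 \<and> H s \<omega> > t}"
  have L: "inverse_sub H t \<omega> = Inf S" using t by (simp add: inverse_sub_def S_def)
  show ?thesis
  proof (cases "S = {}")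
    case True
    then have "H (real n + 1) \<omega> \<le> t" for n :: nat
      unfolding S_def by (metis (mono_tags) empty_Collect_eq add_nonneg_pos not_le of_nat_0_le_iff zero_less_one)
    moreover have "\<not> (\<exists>q::rat. 0 < real_of_rat q \<and> t < H (real_of_rat q) \<omega>)"
      using True by (auto simp: S_def)
    ultimately show ?thesis unfolding L True by blast
  next
    case False
    then obtain r where r: "r > 0" "H r \<omega> > t" by (auto simp: S_def)
    obtain n :: nat where "r \<le> real n + 1"
      by (metis add_increasing2 real_arch_simple zero_le_one)
    then have "H r \<omega> \<le> H (real n + 1) \<omega>" using r by (intro H_mono[OF \<omega>]) auto
    with r have "t < H (real n + 1) \<omega>" by linarith
    then have unbounded: "\<not> (\<forall>n::nat. H (real n + 1) \<omega> \<le> t)" using not_le by blast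
    have "Inf S < a \<longleftrightarrow> (\<exists>s\<in>S. s < a)"
      using False by (intro cInf_less_iff) (auto simp: S_def intro: bdd_belowI[of _ 0])
    also have "\<dots> \<longleftrightarrow> (\<exists>q::rat. 0 < real_of_rat q \<and> real_of_rat q < a \<and> t < H (real_of_rat q) \<omega>)"
    proof
      assume "\<exists>s\<in>S. s < a"
      then obtain s where s: "s > 0" "H s \<omega> > t" "s < a" by (auto simp: S_def)
      obtain q where q: "q \<in> \<rat>" "s < q" "q < a" using Rats_dense_in_real[OF s(3)] by auto
      then obtain q' where q': "q = real_of_rat q'" by (auto elim: Rats_cases)
      have "H s \<omega> \<le> H q \<omega>" using s q by (intro H_mono[OF \<omega>]) auto
      moreover have "0 < real_of_rat q'" using s q q' by linarith
      ultimately show "\<exists>q::rat. 0 < real_of_rat q \<and> real_of_rat q < a \<and> t < H (real_of_rat q) \<omega>"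
        using s q q' by (intro exI[of _ q']) auto
    next
      assume "\<exists>q::rat. 0 < real_of_rat q \<and> real_of_rat q < a \<and> t < H (real_of_rat q) \<omega>"
      then show "\<exists>s\<in>S. s < a" unfolding S_def by blast
    qed
    finally show ?thesis unfolding L using unbounded by blast
  qed
qed

lemma borel_measurable_inverse_sub_pair [measurable]:
  "(\<lambda>(t, \<omega>). inverse_sub H t \<omega>) \<in> borel_measurable (lborel \<Otimes>\<^sub>M M)"
proof (subst borel_measurable_iff_less, intro allI)
  fix a :: real
  let ?P = "\<lambda>(t, \<omega>). (t = 0 \<and> 0 < a) \<or> (t \<noteq> 0 \<and>
    ((\<exists>q::rat. 0 < real_of_rat q \<and> real_of_rat q < a \<and> t < H (real_of_rat q) \<omega>) \<or>
     ((\<forall>n::nat. H (real n + 1) \<omega> \<le> t) \<and> Inf ({}::real set) < a)))"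
  have "inverse_sub H t \<omega> < a \<longleftrightarrow> ?P (t, \<omega>)" if "\<omega> \<in> space M" for t \<omega>
    using inverse_sub_less_iff[OF that] by (cases "t = 0") (auto simp: inverse_sub_def)
  then have "{w \<in> space (lborel \<Otimes>\<^sub>M M). (case w of (t, \<omega>) \<Rightarrow> inverse_sub H t \<omega>) < a}
      = {w \<in> space (lborel \<Otimes>\<^sub>M M). ?P w}"
    by (auto simp: space_pair_measure)
  also have "\<dots> \<in> sets (lborel \<Otimes>\<^sub>M M)" by measurable
  finally show "{w \<in> space (lborel \<Otimes>\<^sub>M M). (case w of (t, \<omega>) \<Rightarrow> inverse_sub H t \<omega>) < a} \<in> sets (lborel \<Otimes>\<^sub>M M)" .
qed

lemma borel_measurable_inverse_sub [measurable]: "inverse_sub H t \<in> borel_measurable M"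
  using measurable_Pair2[OF borel_measurable_inverse_sub_pair, of t] by simp

lemma integrable_bounded_inverse_sub:
  fixes g :: "real \<Rightarrow> real"
  assumes [measurable]: "g \<in> borel_measurable borel" and "\<And>y. \<bar>g y\<bar> \<le> B"
  shows "integrable M (\<lambda>\<omega>. g (inverse_sub H t \<omega>))"
  using assms(2) by (intro integrable_const_bound[where B=B] AE_I2) auto

lemma inverse_sub_greater_iff:
  assumes \<omega>: "\<omega> \<in> space M" and t: "t > 0" and s: "s \<ge> 0"
    and exceeds: "\<exists>r>0. t < H r \<omega>" and no_hit: "H s \<omega> \<noteq> t"
  shows "s < inverse_sub H t \<omega> \<longleftrightarrow> H s \<omega> < t"
proof -
  define S where "S = {r. r > 0 \<and> H r \<omega> > t}"
  have L: "inverse_sub H t \<omega> = Inf S" using t by (simp add: inverse_sub_def S_def)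
  have bdd: "bdd_below S" unfolding S_def by (auto intro: bdd_belowI[of _ 0])
  show ?thesis
  proof
    assume "s < inverse_sub H t \<omega>"
    moreover have "s \<notin> S"
      using calculation L cInf_lower[OF _ bdd, of s] by force
    ultimately show "H s \<omega> < t"
      using no_hit H_zero[OF \<omega>] t s by (cases "s = 0") (auto simp: S_def)
  next
    assume "H s \<omega> < t"
    moreover have "((\<lambda>r. H r \<omega>) \<longlongrightarrow> H s \<omega>) (at_right s)"
      using H_continuous_at_right[OF \<omega> s] by (simp add: continuous_within)
    ultimately have "eventually (\<lambda>r. H r \<omega> < t) (at_right s)"
      by (simp add: order_tendstoD)
    then obtain b where b: "b > s" "\<And>r. s < r \<Longrightarrow> r < b \<Longrightarrow> H r \<omega> < t"
      by (auto simp: eventually_at_right_field)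
    define r0 where "r0 = (s + b) / 2"
    have r0: "s < r0" "H r0 \<omega> < t" using b by (auto simp: r0_def)
    have "r0 \<le> Inf S"
    proof (rule cInf_greatest)
      show "S \<noteq> {}" using exceeds by (auto simp: S_def)
      show "r0 \<le> r" if "r \<in> S" for r
        using that r0 H_mono[OF \<omega>, of r r0] by (force simp: S_def)
    qed
    with r0 L show "s < inverse_sub H t \<omega>" by simp
  qed
qed

end

locale levy_subordinator = subordinator_process +
  fixes Pm :: "real measure"
  assumes levy_measure: "levy_measure Pm"
    and infinite_mass: "emeasure Pm {0<..} = \<infinity>"
    and laplace_H: "\<And>lam t. lam > 0 \<Longrightarrow> t > 0 \<Longrightarrow>
      prob_space.expectation M (\<lambda>\<omega>. exp (- lam * H t \<omega>)) = exp (- t * bernstein Pm lam)"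
    and absolutely_continuous_H: "\<And>t. t > 0 \<Longrightarrow> absolutely_continuous lborel (distr M lborel (H t))"
begin

lemma laplace_H_nonneg:
  assumes "lam > 0" and "s \<ge> 0"
  shows "expectation (\<lambda>\<omega>. exp (- lam * H s \<omega>)) = exp (- s * bernstein Pm lam)"
proof (cases "s = 0")
  case True
  then have "expectation (\<lambda>\<omega>. exp (- lam * H s \<omega>)) = expectation (\<lambda>\<omega>. 1)"
    using H_zero by (intro Bochner_Integration.integral_cong) auto
  with True show ?thesis by (simp add: prob_space)
next
  case False
  with assms show ?thesis by (intro laplace_H) auto
qed

lemma prob_H_le:
  assumes lam: "lam > 0" and r: "r > 0"
  shows "prob {\<omega>\<in>space M. H r \<omega> \<le> t} \<le> exp (lam * t) * exp (- r * bernstein Pm lam)"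
proof -
  have "prob {\<omega>\<in>space M. H r \<omega> \<le> t} = expectation (indicator {\<omega>\<in>space M. H r \<omega> \<le> t})"
    by simp
  also have "\<dots> \<le> expectation (\<lambda>\<omega>. exp (lam * t) * exp (- lam * H r \<omega>))"
  proof (rule integral_mono)
    show "integrable M (\<lambda>\<omega>. exp (lam * t) * exp (- lam * H r \<omega>))"
      using lam r by (intro integrable_mult_right integrable_exp_H) auto
    have "{\<omega>\<in>space M. H r \<omega> \<le> t} \<in> sets M" by measurable
    then show "integrable M (indicator {\<omega>\<in>space M. H r \<omega> \<le> t} :: _ \<Rightarrow> real)"
      by (simp add: integrable_indicator_iff Int_absorb2 sets.sets_into_space less_top[symmetric])
    show "indicator {\<omega>\<in>space M. H r \<omega> \<le> t} \<omega> \<le> exp (lam * t) * exp (- lam * H r \<omega>)" for \<omega>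
    proof -
      have "exp (lam * t) * exp (- lam * H r \<omega>) = exp (lam * (t - H r \<omega>))"
        by (simp add: exp_add[symmetric] algebra_simps)
      moreover have "H r \<omega> \<le> t \<Longrightarrow> 1 \<le> exp (lam * (t - H r \<omega>))"
        using lam by simp
      ultimately show ?thesis by (simp split: split_indicator)
    qed
  qed
  also have "\<dots> = exp (lam * t) * exp (- r * bernstein Pm lam)"
    using laplace_H[OF lam r] by simp
  finally show ?thesis .
qed

lemma AE_H_exceeds: "AE \<omega> in M. \<exists>r>0. t < H r \<omega>"
proof -
  define \<Phi> where "\<Phi> = bernstein Pm 1"
  have "\<Phi> > 0" unfolding \<Phi>_def by (rule bernstein_pos[OF levy_measure infinite_mass]) simp
  define N where "N = {\<omega>\<in>space M. \<forall>n::nat. H (real n + 1) \<omega> \<le> t}"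
  have N: "N \<in> sets M" unfolding N_def by measurable
  have bound: "prob N \<le> exp t * exp (- (real n + 1) * \<Phi>)" for n :: nat
  proof -
    have "{\<omega>\<in>space M. H (real n + 1) \<omega> \<le> t} \<in> sets M" by measurable
    then have "prob N \<le> prob {\<omega>\<in>space M. H (real n + 1) \<omega> \<le> t}"
      by (intro finite_measure_mono) (auto simp: N_def)
    also have "\<dots> \<le> exp t * exp (- (real n + 1) * \<Phi>)"
      using prob_H_le[of 1 "real n + 1" t] by (simp add: \<Phi>_def)
    finally show ?thesis .
  qed
  have "(\<lambda>n::nat. exp t * exp (- (real n + 1) * \<Phi>)) \<longlonglongrightarrow> 0"
    using \<open>\<Phi> > 0\<close> by real_asymp
  then have "prob N \<le> 0"
    by (rule LIMSEQ_le_const) (use bound in auto)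
  with N have "AE \<omega> in M. \<omega> \<notin> N"
    by (intro AE_not_in) (simp add: measure_le_0_iff null_sets_def emeasure_eq_measure)
  with AE_space show ?thesis
  proof eventually_elim
    case (elim \<omega>)
    then obtain n :: nat where "t < H (real n + 1) \<omega>" by (auto simp: N_def not_le)
    then show ?case by (intro exI[of _ "real n + 1"]) auto
  qed
qed

lemma AE_H_neq: "s > 0 \<Longrightarrow> AE \<omega> in M. H s \<omega> \<noteq> t"
  using absolutely_continuous_AE[OF _ absolutely_continuous_H AE_lborel_singleton, of s t]
  by (simp add: AE_distr_iff)

lemma nn_integral_inverse_sub_greater:
  assumes t: "t > 0" and s: "s \<ge> 0"
  shows "(\<integral>\<^sup>+\<omega>. indicator {s<..} (inverse_sub H t \<omega>) \<partial>M) = (\<integral>\<^sup>+\<omega>. indicator {..<t} (H s \<omega>) \<partial>M)"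
proof (rule nn_integral_cong_AE)
  have "AE \<omega> in M. H s \<omega> \<noteq> t"
    using AE_H_neq[of s t] H_zero t s by (cases "s = 0") auto
  with AE_H_exceeds[of t] AE_space
  show "AE \<omega> in M. indicator {s<..} (inverse_sub H t \<omega>) = (indicator {..<t} (H s \<omega>) :: ennreal)"
    by eventually_elim (use inverse_sub_greater_iff t s in \<open>simp split: split_indicator\<close>)
qed

lemma nn_laplace_prob_inverse_sub_greater:
  assumes lam: "lam > 0" and s: "s \<ge> 0"
  shows "(\<integral>\<^sup>+t. ennreal (indicator {0<..} t * exp (- lam * t))
      * (\<integral>\<^sup>+\<omega>. indicator {s<..} (inverse_sub H t \<omega>) \<partial>M) \<partial>lborel)
    = ennreal (exp (- s * bernstein Pm lam) / lam)"
proof -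
  have "(\<integral>\<^sup>+t. ennreal (indicator {0<..} t * exp (- lam * t))
      * (\<integral>\<^sup>+\<omega>. indicator {s<..} (inverse_sub H t \<omega>) \<partial>M) \<partial>lborel)
    = (\<integral>\<^sup>+t. ennreal (indicator {0<..} t * exp (- lam * t)) * (\<integral>\<^sup>+\<omega>. indicator {..<t} (H s \<omega>) \<partial>M) \<partial>lborel)"
    using nn_integral_inverse_sub_greater[OF _ s] by (intro nn_integral_cong) (simp split: split_indicator)
  also have "\<dots> = (\<integral>\<^sup>+t. (\<integral>\<^sup>+\<omega>. ennreal (indicator {0<..} t * exp (- lam * t)) * indicator {..<t} (H s \<omega>) \<partial>M) \<partial>lborel)"
    by (intro nn_integral_cong nn_integral_cmult[symmetric]) measurable
  also have "\<dots> = (\<integral>\<^sup>+\<omega>. (\<integral>\<^sup>+t. ennreal (indicator {0<..} t * exp (- lam * t)) * indicator {..<t} (H s \<omega>) \<partial>lborel) \<partial>M)"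
    by (rule pair_sigma_finite.Fubini'[OF pair_sigma_finite_lborel])
      (unfold indicator_def lessThan_iff greaterThan_iff, measurable)
  also have "\<dots> = (\<integral>\<^sup>+\<omega>. ennreal (exp (- lam * H s \<omega>) / lam) \<partial>M)"
  proof (rule nn_integral_cong)
    fix \<omega> assume "\<omega> \<in> space M"
    then have "(\<integral>\<^sup>+t. ennreal (indicator {0<..} t * exp (- lam * t)) * indicator {..<t} (H s \<omega>) \<partial>lborel)
        = (\<integral>\<^sup>+t. ennreal (exp (- lam * t)) * indicator {H s \<omega><..} t \<partial>lborel)"
      using H_nonneg[of \<omega> s] s by (intro nn_integral_cong) (auto split: split_indicator)
    with nn_integral_exp_greaterThan[OF lam]
    show "(\<integral>\<^sup>+t. ennreal (indicator {0<..} t * exp (- lam * t)) * indicator {..<t} (H s \<omega>) \<partial>lborel)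
        = ennreal (exp (- lam * H s \<omega>) / lam)" by simp
  qed
  also have "\<dots> = ennreal (expectation (\<lambda>\<omega>. exp (- lam * H s \<omega>)) / lam)"
    using lam s integrable_exp_H[of lam s] by (subst nn_integral_eq_integral) auto
  also have "\<dots> = ennreal (exp (- s * bernstein Pm lam) / lam)"
    using laplace_H_nonneg[OF lam s] by simp
  finally show ?thesis .
qed

lemma ennreal_expectation_damped_excess:
  assumes \<theta>: "\<theta> > 0"
  shows "ennreal (expectation (\<lambda>\<omega>. damped_excess \<theta> x (inverse_sub H t \<omega>)))
    = (\<integral>\<^sup>+s. ennreal (exp (- \<theta> * (s - x))) * indicator {x..} s
        * (\<integral>\<^sup>+\<omega>. indicator {s<..} (inverse_sub H t \<omega>) \<partial>M) \<partial>lborel)"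
proof -
  have "ennreal (expectation (\<lambda>\<omega>. damped_excess \<theta> x (inverse_sub H t \<omega>)))
      = (\<integral>\<^sup>+\<omega>. ennreal (damped_excess \<theta> x (inverse_sub H t \<omega>)) \<partial>M)"
    using \<theta> damped_excess_nonneg damped_excess_le
    by (intro nn_integral_eq_integral[symmetric] integrable_bounded_inverse_sub[where B="1 / \<theta>"] AE_I2)
      (auto simp: abs_of_nonneg)
  also have "\<dots> = (\<integral>\<^sup>+\<omega>. (\<integral>\<^sup>+s. ennreal (exp (- \<theta> * (s - x))) * indicator {x..} s
      * indicator {s<..} (inverse_sub H t \<omega>) \<partial>lborel) \<partial>M)"
    using ennreal_damped_excess_eq_nn_integral[OF \<theta>] by simp
  also have "\<dots> = (\<integral>\<^sup>+s. (\<integral>\<^sup>+\<omega>. ennreal (exp (- \<theta> * (s - x))) * indicator {x..} s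
      * indicator {s<..} (inverse_sub H t \<omega>) \<partial>M) \<partial>lborel)"
    by (rule pair_sigma_finite.Fubini'[OF pair_sigma_finite_lborel, symmetric])
      (unfold indicator_def atLeast_iff greaterThan_iff, measurable)
  also have "\<dots> = (\<integral>\<^sup>+s. ennreal (exp (- \<theta> * (s - x))) * indicator {x..} s
      * (\<integral>\<^sup>+\<omega>. indicator {s<..} (inverse_sub H t \<omega>) \<partial>M) \<partial>lborel)"
    by (intro nn_integral_cong nn_integral_cmult) (unfold indicator_def greaterThan_iff, measurable)
  finally show ?thesis .
qed

lemma nn_laplace_expectation_damped_excess:
  assumes \<theta>: "\<theta> > 0" and x: "x \<ge> 0" and lam: "lam > 0"
  shows "(\<integral>\<^sup>+t. ennreal (indicator {0<..} t * exp (- lam * t))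
      * ennreal (expectation (\<lambda>\<omega>. damped_excess \<theta> x (inverse_sub H t \<omega>))) \<partial>lborel)
    = ennreal (1 / lam * (1 / (\<theta> + bernstein Pm lam)) * exp (- x * bernstein Pm lam))"
proof -
  define w where "w t = ennreal (indicator {0<..} t * exp (- lam * t))" for t :: real
  define c where "c s = ennreal (exp (- \<theta> * (s - x))) * indicator {x..} s" for s :: real
  define P where "P t s = (\<integral>\<^sup>+\<omega>. indicator {s<..} (inverse_sub H t \<omega>) \<partial>M)" for t s
  have [measurable]: "w \<in> borel_measurable lborel"
    unfolding w_def[abs_def] by (simp add: indicator_def)
  have [measurable]: "c \<in> borel_measurable lborel"
    unfolding c_def[abs_def] by (simp add: indicator_def)
  have P_pair [measurable]: "(\<lambda>(t, s). P t s) \<in> borel_measurable (lborel \<Otimes>\<^sub>M lborel)"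
  proof -
    have "(\<lambda>ts. \<integral>\<^sup>+\<omega>. indicator {snd ts<..} (inverse_sub H (fst ts) \<omega>) \<partial>M) \<in> borel_measurable (lborel \<Otimes>\<^sub>M lborel)"
      by (rule borel_measurable_nn_integral) (unfold indicator_def greaterThan_iff, measurable)
    then show ?thesis by (simp add: P_def case_prod_beta')
  qed
  have [measurable]: "(\<lambda>s. P t s) \<in> borel_measurable lborel" "(\<lambda>t. P t s) \<in> borel_measurable lborel" for t s
    using measurable_Pair2[OF P_pair, of t] measurable_Pair1[OF P_pair, of s] by simp_all
  have "(\<integral>\<^sup>+t. w t * ennreal (expectation (\<lambda>\<omega>. damped_excess \<theta> x (inverse_sub H t \<omega>))) \<partial>lborel)
      = (\<integral>\<^sup>+t. w t * (\<integral>\<^sup>+s. c s * P t s \<partial>lborel) \<partial>lborel)"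
    by (simp add: ennreal_expectation_damped_excess[OF \<theta>] c_def P_def)
  also have "\<dots> = (\<integral>\<^sup>+t. (\<integral>\<^sup>+s. w t * (c s * P t s) \<partial>lborel) \<partial>lborel)"
    by (intro nn_integral_cong nn_integral_cmult[symmetric]) measurable
  also have "\<dots> = (\<integral>\<^sup>+s. (\<integral>\<^sup>+t. w t * (c s * P t s) \<partial>lborel) \<partial>lborel)"
    by (rule lborel_pair.Fubini'[symmetric]) measurable
  also have "\<dots> = (\<integral>\<^sup>+s. c s * (\<integral>\<^sup>+t. w t * P t s \<partial>lborel) \<partial>lborel)"
    by (intro nn_integral_cong) (subst nn_integral_cmult[symmetric], measurable, simp add: ac_simps)
  also have "\<dots> = (\<integral>\<^sup>+s. c s * ennreal (exp (- s * bernstein Pm lam) / lam) \<partial>lborel)"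
    using x nn_laplace_prob_inverse_sub_greater[OF lam]
    by (intro nn_integral_cong) (simp add: c_def w_def P_def split: split_indicator)
  also have "\<dots> = ennreal (1 / lam * (1 / (\<theta> + bernstein Pm lam)) * exp (- x * bernstein Pm lam))"
    unfolding c_def using bernstein_pos[OF levy_measure infinite_mass lam] \<theta> lam
    by (intro nn_integral_damped_exp_laplace) auto
  finally show ?thesis by (simp add: w_def)
qed

lemma nn_laplace_prob_inverse_sub_atLeast:
  assumes x: "x \<ge> 0" and lam: "lam > 0"
    and absolutely_continuous_L: "\<And>t. t > 0 \<Longrightarrow> absolutely_continuous lborel (distr M lborel (inverse_sub H t))"
  shows "(\<integral>\<^sup>+t. ennreal (indicator {0<..} t * exp (- lam * t))
      * ennreal (expectation (\<lambda>\<omega>. indicator {x..} (inverse_sub H t \<omega>))) \<partial>lborel)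
    = ennreal (exp (- x * bernstein Pm lam) / lam)"
proof -
  have "ennreal (expectation (\<lambda>\<omega>. indicator {x..} (inverse_sub H t \<omega>)))
      = (\<integral>\<^sup>+\<omega>. indicator {x<..} (inverse_sub H t \<omega>) \<partial>M)" if t: "t > 0" for t
  proof -
    have "AE \<omega> in M. inverse_sub H t \<omega> \<noteq> x"
      using absolutely_continuous_AE[OF _ absolutely_continuous_L[OF t] AE_lborel_singleton, of x]
      by (simp add: AE_distr_iff)
    then have "(\<integral>\<^sup>+\<omega>. ennreal (indicator {x..} (inverse_sub H t \<omega>)) \<partial>M)
        = (\<integral>\<^sup>+\<omega>. indicator {x<..} (inverse_sub H t \<omega>) \<partial>M)"
      by (intro nn_integral_cong_AE) (auto elim!: eventually_mono split: split_indicator)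
    moreover have "integrable M (\<lambda>\<omega>. indicator {x..} (inverse_sub H t \<omega>) :: real)"
      by (rule integrable_bounded_inverse_sub[where B=1]) (simp_all add: indicator_def)
    ultimately show ?thesis
      by (subst nn_integral_eq_integral[symmetric]) auto
  qed
  then have "(\<integral>\<^sup>+t. ennreal (indicator {0<..} t * exp (- lam * t))
      * ennreal (expectation (\<lambda>\<omega>. indicator {x..} (inverse_sub H t \<omega>))) \<partial>lborel)
    = (\<integral>\<^sup>+t. ennreal (indicator {0<..} t * exp (- lam * t))
      * (\<integral>\<^sup>+\<omega>. indicator {x<..} (inverse_sub H t \<omega>) \<partial>M) \<partial>lborel)"
    by (intro nn_integral_cong) (simp split: split_indicator)
  also have "\<dots> = ennreal (exp (- x * bernstein Pm lam) / lam)"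
    by (rule nn_laplace_prob_inverse_sub_greater[OF lam x])
  finally show ?thesis .
qed

lemma
  fixes g :: "real \<Rightarrow> real"
  assumes [measurable]: "g \<in> borel_measurable borel" and g: "\<And>y. 0 \<le> g y"
    and nn: "(\<integral>\<^sup>+t. ennreal (indicator {0<..} t * exp (- lam * t))
      * ennreal (expectation (\<lambda>\<omega>. g (inverse_sub H t \<omega>))) \<partial>lborel) = ennreal r"
    and r: "0 \<le> r"
  shows set_integrable_laplace_expectation:
      "set_integrable lborel {0<..} (\<lambda>t. exp (- lam * t) * expectation (\<lambda>\<omega>. g (inverse_sub H t \<omega>)))"
    and set_integral_laplace_expectation:
      "(LBINT t:{0<..}. exp (- lam * t) * expectation (\<lambda>\<omega>. g (inverse_sub H t \<omega>))) = r"
proof -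
  have nonneg: "0 \<le> expectation (\<lambda>\<omega>. g (inverse_sub H t \<omega>))" for t
    using g by (simp add: integral_nonneg)
  have "(\<integral>\<^sup>+t. ennreal (indicator {0<..} t * (exp (- lam * t) * expectation (\<lambda>\<omega>. g (inverse_sub H t \<omega>)))) \<partial>lborel)
      = ennreal r"
    using nn nonneg by (simp add: ennreal_mult mult.assoc)
  moreover have "(\<lambda>t. exp (- lam * t) * expectation (\<lambda>\<omega>. g (inverse_sub H t \<omega>))) \<in> borel_measurable lborel"
    by measurable
  ultimately show "set_integrable lborel {0<..} (\<lambda>t. exp (- lam * t) * expectation (\<lambda>\<omega>. g (inverse_sub H t \<omega>)))"
    and "(LBINT t:{0<..}. exp (- lam * t) * expectation (\<lambda>\<omega>. g (inverse_sub H t \<omega>))) = r"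
    using nonneg r by (auto intro: set_integrable_of_nn_integral set_integral_eq_of_nn_integral)
qed

lemma
  assumes \<theta>: "\<theta> > 0" and x: "x \<ge> 0" and lam: "lam > 0"
  shows set_integrable_laplace_expectation_damped_excess:
      "set_integrable lborel {0<..} (\<lambda>t. exp (- lam * t) * expectation (\<lambda>\<omega>. damped_excess \<theta> x (inverse_sub H t \<omega>)))"
    and laplace_expectation_damped_excess:
      "(LBINT t:{0<..}. exp (- lam * t) * expectation (\<lambda>\<omega>. damped_excess \<theta> x (inverse_sub H t \<omega>)))
        = 1 / lam * (1 / (\<theta> + bernstein Pm lam)) * exp (- x * bernstein Pm lam)"
proof -
  note nn = nn_laplace_expectation_damped_excess[OF \<theta> x lam]
  have "0 \<le> 1 / lam * (1 / (\<theta> + bernstein Pm lam)) * exp (- x * bernstein Pm lam)"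
    using bernstein_pos[OF levy_measure infinite_mass lam] \<theta> lam by simp
  note r = borel_measurable_damped_excess damped_excess_nonneg[OF \<theta>] nn this
  show "set_integrable lborel {0<..} (\<lambda>t. exp (- lam * t) * expectation (\<lambda>\<omega>. damped_excess \<theta> x (inverse_sub H t \<omega>)))"
    by (rule set_integrable_laplace_expectation[OF r])
  show "(LBINT t:{0<..}. exp (- lam * t) * expectation (\<lambda>\<omega>. damped_excess \<theta> x (inverse_sub H t \<omega>)))
      = 1 / lam * (1 / (\<theta> + bernstein Pm lam)) * exp (- x * bernstein Pm lam)"
    by (rule set_integral_laplace_expectation[OF r])
qed

lemma
  assumes x: "x \<ge> 0" and lam: "lam > 0"
    and absolutely_continuous_L: "\<And>t. t > 0 \<Longrightarrow> absolutely_continuous lborel (distr M lborel (inverse_sub H t))"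
  shows set_integrable_laplace_prob_inverse_sub_atLeast:
      "set_integrable lborel {0<..} (\<lambda>t. exp (- lam * t) * expectation (\<lambda>\<omega>. indicator {x..} (inverse_sub H t \<omega>)))"
    and laplace_prob_inverse_sub_atLeast:
      "(LBINT t:{0<..}. exp (- lam * t) * expectation (\<lambda>\<omega>. indicator {x..} (inverse_sub H t \<omega>)))
        = exp (- x * bernstein Pm lam) / lam"
proof -
  note nn = nn_laplace_prob_inverse_sub_atLeast[OF x lam absolutely_continuous_L]
  have "0 \<le> exp (- x * bernstein Pm lam) / lam" using lam by simp
  note r = borel_measurable_indicator[OF atLeast_borel] _ nn this
  show "set_integrable lborel {0<..} (\<lambda>t. exp (- lam * t) * expectation (\<lambda>\<omega>. indicator {x..} (inverse_sub H t \<omega>)))"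
    by (rule set_integrable_laplace_expectation[OF r]) simp
  show "(LBINT t:{0<..}. exp (- lam * t) * expectation (\<lambda>\<omega>. indicator {x..} (inverse_sub H t \<omega>)))
      = exp (- x * bernstein Pm lam) / lam"
    by (rule set_integral_laplace_expectation[OF r]) simp
qed

lemma laplace_expectation_exp_overshoot:
  assumes \<theta>: "\<theta> > 0" and x: "x \<ge> 0" and lam: "lam > 0"
    and absolutely_continuous_L: "\<And>t. t > 0 \<Longrightarrow> absolutely_continuous lborel (distr M lborel (inverse_sub H t))"
  shows "(LBINT t:{0<..}. exp (- lam * t)
      * expectation (\<lambda>\<omega>. exp (- \<theta> * (inverse_sub H t \<omega> - x)) * indicator {x..} (inverse_sub H t \<omega>)))
    = bernstein Pm lam / lam * (1 / (\<theta> + bernstein Pm lam)) * exp (- x * bernstein Pm lam)"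
proof -
  define \<Phi> where "\<Phi> = bernstein Pm lam"
  have \<Phi>: "\<Phi> > 0" unfolding \<Phi>_def by (rule bernstein_pos[OF levy_measure infinite_mass lam])
  define I where "I t = expectation (\<lambda>\<omega>. indicator {x..} (inverse_sub H t \<omega>) :: real)" for t
  define D where "D t = expectation (\<lambda>\<omega>. damped_excess \<theta> x (inverse_sub H t \<omega>))" for t
  have expectation_split: "expectation (\<lambda>\<omega>. exp (- \<theta> * (inverse_sub H t \<omega> - x)) * indicator {x..} (inverse_sub H t \<omega>))
      = I t - \<theta> * D t" for t
  proof -
    have "integrable M (\<lambda>\<omega>. indicator {x..} (inverse_sub H t \<omega>) :: real)"
      by (rule integrable_bounded_inverse_sub[where B=1]) (simp_all add: indicator_def)
    moreover have "integrable M (\<lambda>\<omega>. damped_excess \<theta> x (inverse_sub H t \<omega>))"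
      using \<theta> damped_excess_nonneg damped_excess_le
      by (intro integrable_bounded_inverse_sub[where B="1 / \<theta>"]) (auto simp: abs_of_nonneg)
    moreover have "expectation (\<lambda>\<omega>. exp (- \<theta> * (inverse_sub H t \<omega> - x)) * indicator {x..} (inverse_sub H t \<omega>))
        = expectation (\<lambda>\<omega>. indicator {x..} (inverse_sub H t \<omega>) - \<theta> * damped_excess \<theta> x (inverse_sub H t \<omega>))"
      using \<theta> by (intro Bochner_Integration.integral_cong exp_mult_indicator_eq_damped_excess) auto
    ultimately show ?thesis by (simp add: I_def D_def)
  qed
  have "set_integrable lborel {0<..} (\<lambda>t. exp (- lam * t) * I t)"
    unfolding I_def by (rule set_integrable_laplace_prob_inverse_sub_atLeast[OF x lam absolutely_continuous_L])
  moreover have "set_integrable lborel {0<..} (\<lambda>t. exp (- lam * t) * D t)"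
    unfolding D_def by (rule set_integrable_laplace_expectation_damped_excess[OF \<theta> x lam])
  ultimately have "(LBINT t:{0<..}. exp (- lam * t)
      * expectation (\<lambda>\<omega>. exp (- \<theta> * (inverse_sub H t \<omega> - x)) * indicator {x..} (inverse_sub H t \<omega>)))
    = (LBINT t:{0<..}. exp (- lam * t) * I t) - \<theta> * (LBINT t:{0<..}. exp (- lam * t) * D t)"
    by (simp only: expectation_split)
      (simp add: right_diff_distrib mult.left_commute[of _ \<theta>] set_integral_diff set_integral_mult_right
        set_integrable_mult_right)
  also have "\<dots> = exp (- x * \<Phi>) / lam - \<theta> * (1 / lam * (1 / (\<theta> + \<Phi>)) * exp (- x * \<Phi>))"
    unfolding I_def D_def \<Phi>_def
    using laplace_prob_inverse_sub_atLeast[OF x lam absolutely_continuous_L]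
      laplace_expectation_damped_excess[OF \<theta> x lam] by simp
  also have "\<dots> = \<Phi> / lam * (1 / (\<theta> + \<Phi>)) * exp (- x * \<Phi>)"
    using \<theta> \<Phi> lam by (simp add: divide_simps) (simp add: algebra_simps)
  finally show ?thesis by (simp add: \<Phi>_def)
qed

end

theorem proposition2p1:
  fixes M :: "'a measure" and H :: "real \<Rightarrow> 'a \<Rightarrow> real" and Pm :: "real measure"
    and \<theta> :: real
  assumes sub: "subordinator M H"
    and levy: "levy_measure Pm"
    and infinite_mass: "emeasure Pm {0<..} = \<infinity>"
    and laplace: "\<And>lam t. lam > 0 \<Longrightarrow> t > 0 \<Longrightarrow>
        prob_space.expectation M (\<lambda>\<omega>. exp (- lam * H t \<omega>)) = exp (- t * bernstein Pm lam)"
    and dens_H: "\<And>t. t > 0 \<Longrightarrow> absolutely_continuous lborel (distr M lborel (H t))"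
    and dens_L: "\<And>t. t > 0 \<Longrightarrow> absolutely_continuous lborel (distr M lborel (inverse_sub H t))"
    and theta: "\<theta> > 0"
  shows "\<forall>x \<ge> 0. \<forall>lam > 0.
      (LBINT t:{0<..}. exp (- lam * t) * prob_space.expectation M
          (\<lambda>\<omega>. (1 - exp (- \<theta> * (inverse_sub H t \<omega> - x))) / \<theta>
                 * indicator {x..} (inverse_sub H t \<omega>)))
        = 1 / lam * (1 / (\<theta> + bernstein Pm lam)) * exp (- x * bernstein Pm lam)
    \<and> (LBINT t:{0<..}. exp (- lam * t) * prob_space.expectation M
          (\<lambda>\<omega>. exp (- \<theta> * (inverse_sub H t \<omega> - x)) * indicator {x..} (inverse_sub H t \<omega>)))
        = bernstein Pm lam / lam * (1 / (\<theta> + bernstein Pm lam)) * exp (- x * bernstein Pm lam)"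
proof -
  interpret levy_subordinator M H Pm
    by unfold_locales (fact sub levy infinite_mass laplace dens_H)+
  show ?thesis
    using laplace_expectation_damped_excess[OF theta] laplace_expectation_exp_overshoot[OF theta _ _ dens_L]
    unfolding damped_excess_def by blast
qed

end
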